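(* Let $\mathcal{G}_L=(\mathcal{V}_L,\mathcal{E}_L)$ be a coloured graph obtained from complete graphs $G_1,\dots,G_L$ by the inductive construction described in the context, with vertex weights $w(v)$ and edge weights $w(e)$. Let $t>0$ and consider the hopping Hamiltonian $H_{\mathrm{hop}}=\sum_{v,v'\in\mathcal{V}_L}\sum_{\sigma=\uparrow,\downarrow}t_{v,v'}c_{v,\sigma}^\dagger c_{v',\sigma}$, where $t_{v,v'}=w(e)t$ if $e=\{v,v'\}\in\mathcal{E}_L$, $t_{v,v}=w(v)t$, and $t_{v,v'}=0$ otherwise. Then the lowest single-electron energy of $H_{\mathrm{hop}}$ is $0$, and this eigenvalue is $(|\mathcal{V}_L|-L)$-fold degenerate (per spin direction).
   Context: Construction. Let $G_l=(V_l,E_l)$, $l=1,\dots,L$, be complete graphs with $|V_l|\ge 2$ and $E_l=\{\{v,v'\}: v,v'\in V_l, v\neq v'\}$. In each $V_l$ one vertex $v_l^0$ is painted black, all other vertices of $V_l$ are painted white. Set $\mathcal{G}_1=G_1$ with this colouring. For $l=2,\dots,L$: choose an integer $z_l$ with $0<z_l\le |V_l|-1$, choose $z_l$ white vertices of $V_l$ and identify each of them with a vertex (black or white; distinct chosen vertices with distinct vertices) of $\mathcal{V}_{l-1}$; then $\mathcal{V}_l=\mathcal{V}_{l-1}\cup V_l$ with these identifications, $\mathcal{E}_l=\mathcal{E}_{l-1}\cup E_l$ where edges joining the same two vertices are merged into one edge. A white vertex identified with a black one becomes black; two identified white vertices stay white; the black vertex $v_l^0$ is never identified with an earlier vertex.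 Thus the black vertices of $\mathcal{G}_L$ are exactly $v_1^0,\dots,v_L^0$ and the set $\mathcal{V}_L^{W}$ of white vertices has $|\mathcal{V}_L|-L$ elements; the sets $V_l,E_l$ are regarded as subsets of $\mathcal{V}_L,\mathcal{E}_L$. The weight $w(v)$ of $v\in\mathcal{V}_L$ is the number of $l$ with $v\in V_l$; the weight $w(e)$ of $e\in\mathcal{E}_L$ is the number of $l$ with $e\in E_l$. Fermions: $c_{v,\sigma},c_{v,\sigma}^\dagger$ ($v\in\mathcal{V}_L$, $\sigma\in\{\uparrow,\downarrow\}$) satisfy the canonical anticommutation relations $\{c_{v,\sigma},c_{v',\tau}\}=0$, $\{c^\dagger_{v,\sigma},c_{v',\tau}\}=\delta_{v,v'}\delta_{\sigma,\tau}$. *)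

theory Defs
  imports "HOL-Analysis.Analysis"
begin

text \<open>The coloured graph is encoded by the family of vertex sets Vs l (l = 1..L) of the
  complete graphs G_l, viewed as subsets of the final vertex set (a finite type 'n), together
  with the black vertices b l = v_l^0.\<close>

definition cedges :: "'a set \<Rightarrow> 'a set set" where
  "cedges V = {{v, v'} | v v'. v \<in> V \<and> v' \<in> V \<and> v \<noteq> v'}"

definition graph_edges :: "nat \<Rightarrow> (nat \<Rightarrow> 'a set) \<Rightarrow> 'a set set" where
  "graph_edges L Vs = (\<Union>l\<in>{1..L}. cedges (Vs l))"

definition vweight :: "nat \<Rightarrow> (nat \<Rightarrow> 'a set) \<Rightarrow> 'a \<Rightarrow> nat" where
  "vweight L Vs v = card {l \<in> {1..L}. v \<in> Vs l}"

definition eweight :: "nat \<Rightarrow> (nat \<Rightarrow> 'a set) \<Rightarrow> 'a set \<Rightarrow> nat" where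
  "eweight L Vs e = card {l \<in> {1..L}. e \<in> cedges (Vs l)}"

text \<open>Result of the inductive construction: each V_l has at least two vertices and contains
  its black vertex v_l^0; for l >= 2, v_l^0 is new (not an earlier vertex) and
  z_l = |V_l \<inter> V_{l-1}-graph| > 0 (the identified vertices are then automatically white
  vertices of V_l, and z_l <= |V_l| - 1).\<close>

definition valid_construction :: "nat \<Rightarrow> (nat \<Rightarrow> 'a set) \<Rightarrow> (nat \<Rightarrow> 'a) \<Rightarrow> bool" where
  "valid_construction L Vs b \<longleftrightarrow>
     L \<ge> 1 \<and>
     (\<forall>l\<in>{1..L}. finite (Vs l) \<and> card (Vs l) \<ge> 2 \<and> b l \<in> Vs l) \<and>
     (\<forall>l\<in>{2..L}. b l \<notin> (\<Union>k\<in>{1..<l}. Vs k) \<and> Vs l \<inter> (\<Union>k\<in>{1..<l}. Vs k) \<noteq> {})"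

definition hop_matrix :: "nat \<Rightarrow> (nat \<Rightarrow> 'n::finite set) \<Rightarrow> real \<Rightarrow> real^'n^'n" where
  "hop_matrix L Vs t = (\<chi> v v'.
     if v = v' then real (vweight L Vs v) * t
     else if {v, v'} \<in> graph_edges L Vs then real (eweight L Vs {v, v'}) * t
     else 0)"

end

theory Submission
  imports Defs
begin

text \<open>The hopping matrix is \<open>H = t \<Sum>\<^sub>l a\<^sub>l a\<^sub>l\<^sup>T\<close>, where \<open>a\<^sub>l\<close> is the indicator vector of \<open>V\<^sub>l\<close>,
  so \<open>x \<bullet> H x = t \<Sum>\<^sub>l (a\<^sub>l \<bullet> x)\<^sup>2 \<ge> 0\<close>. Being real symmetric and positive semidefinite, \<open>H\<close>
  has only real nonnegative eigenvalues, and its null space is the orthogonal complement of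
  the \<open>a\<^sub>l\<close>. These are linearly independent, since the black vertex \<open>v\<^sub>l\<^sup>0\<close> lies in \<open>V\<^sub>l\<close> but
  in no earlier \<open>V\<^sub>k\<close>; so the energy 0 has multiplicity \<open>|V| - L\<close>, which is positive because
  \<open>V\<^sub>1\<close> contains a white vertex.\<close>

lemma symmetric_psd_complex_eigenvalue:
  fixes M :: "real^'n^'n" and z :: "complex^'n"
  assumes symmetric: "transpose M = M"
    and psd: "\<And>x. 0 \<le> x \<bullet> (M *v x)"
    and "z \<noteq> 0"
    and eigen: "(\<chi> i j. complex_of_real (M $ i $ j)) *v z = mu *s z"
  shows "mu \<in> \<real> \<and> 0 \<le> Re mu"
proof -
  define a where "a = (\<chi> i. Re (z $ i))"
  define b where "b = (\<chi> i. Im (z $ i))"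
  define p where "p = Re mu"
  define q where "q = Im mu"
  have "M *v a = p *\<^sub>R a - q *\<^sub>R b \<and> M *v b = q *\<^sub>R a + p *\<^sub>R b"
  proof -
    have "Re (((\<chi> i j. complex_of_real (M $ i $ j)) *v z) $ i) = (M *v a) $ i"
     and "Im (((\<chi> i j. complex_of_real (M $ i $ j)) *v z) $ i) = (M *v b) $ i" for i
      by (simp_all add: matrix_vector_mult_def a_def b_def)
    then show ?thesis
      using eigen by (auto simp: vec_eq_iff a_def b_def p_def q_def algebra_simps)
  qed
  then have Ma: "M *v a = p *\<^sub>R a - q *\<^sub>R b" and Mb: "M *v b = q *\<^sub>R a + p *\<^sub>R b"
    by auto
  \<comment> \<open>Symmetry of \<open>M\<close> kills the imaginary part: \<open>a \<bullet> M b - b \<bullet> M a = q (|a|\<^sup>2 + |b|\<^sup>2)\<close>.\<close>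
  have "a \<bullet> (M *v b) = b \<bullet> (M *v a)"
    by (metis dot_lmul_matrix inner_commute symmetric vector_transpose_matrix)
  then have "q * (a \<bullet> a + b \<bullet> b) = 0"
    unfolding Ma Mb by (simp add: algebra_simps inner_commute)
  moreover have "a \<noteq> 0 \<or> b \<noteq> 0"
    using \<open>z \<noteq> 0\<close> by (auto simp: vec_eq_iff a_def b_def complex_eq_iff)
  then have norms: "0 < a \<bullet> a + b \<bullet> b"
    by (metis add_nonneg_pos add_pos_nonneg inner_ge_zero inner_gt_zero_iff)
  ultimately have "q = 0"
    by simp
  have "0 \<le> a \<bullet> (M *v a) + b \<bullet> (M *v b)"
    using psd by simp
  also have "\<dots> = p * (a \<bullet> a + b \<bullet> b)"
    unfolding Ma Mb \<open>q = 0\<close> by (simp add: algebra_simps)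
  finally have "0 \<le> p"
    using norms by (simp add: zero_le_mult_iff)
  then show ?thesis
    using \<open>q = 0\<close> by (simp add: p_def q_def complex_is_Real_iff)
qed

lemma dim_orthogonal_complement:
  fixes U :: "'a::euclidean_space set"
  shows "dim {x. \<forall>u\<in>U. u \<bullet> x = 0} = DIM('a) - dim U"
proof -
  have "{x. \<forall>u\<in>U. u \<bullet> x = 0} = {x \<in> UNIV. \<forall>u\<in>span U. orthogonal u x}"
  proof safe
    fix x u
    assume "\<forall>u\<in>U. u \<bullet> x = 0" and "u \<in> span U"
    then show "orthogonal u x"
      by (metis orthogonal_commute orthogonal_def orthogonal_to_span)
  qed (auto simp: orthogonal_def intro: span_base)
  then show ?thesis
    using dim_subspace_orthogonal_to_vectors[OF subspace_span subspace_UNIV subset_UNIV, of U]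
    by simp
qed

definition indicator_vec :: "'n set \<Rightarrow> real^'n::finite" where
  "indicator_vec A = (\<chi> i. indicator A i)"

lemma indicator_vec_nth [simp]: "indicator_vec A $ i = indicator A i"
  by (simp add: indicator_vec_def)

lemma span_nth_eq_0:
  fixes V :: "(real^'n) set"
  assumes "y \<in> span V" and "\<And>v. v \<in> V \<Longrightarrow> v $ p = 0"
  shows "y $ p = 0"
  using assms(1)
proof (induction rule: span_induct)
  show "subspace {y::real^'n. y $ p = 0}"
    by (simp add: subspace_def)
qed (use assms(2) in auto)

lemma independent_indicator_vecs:
  fixes S :: "nat \<Rightarrow> 'n::finite set"
  assumes "\<And>l. 1 \<le> l \<Longrightarrow> l \<le> n \<Longrightarrow> p l \<in> S l"
    and "\<And>k l. 1 \<le> k \<Longrightarrow> k < l \<Longrightarrow> l \<le> n \<Longrightarrow> p l \<notin> S k"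
  shows "independent ((\<lambda>l. indicator_vec (S l)) ` {1..n})
    \<and> inj_on (\<lambda>l. indicator_vec (S l)) {1..n}"
  using assms
proof (induction n)
  case 0
  then show ?case by (simp add: independent_empty)
next
  case (Suc n)
  let ?a = "\<lambda>l. indicator_vec (S l)"
  have "?a (Suc n) \<notin> span (?a ` {1..n})"
  proof
    assume "?a (Suc n) \<in> span (?a ` {1..n})"
    then have "?a (Suc n) $ p (Suc n) = 0"
      by (rule span_nth_eq_0) (use Suc.prems(2) in auto)
    with Suc.prems(1)[of "Suc n"] show False
      by simp
  qed
  moreover from this have "?a (Suc n) \<notin> ?a ` {1..n}"
    by (metis span_base)
  moreover have "independent (?a ` {1..n}) \<and> inj_on ?a {1..n}"
    using Suc.prems by (intro Suc.IH) auto
  moreover have "{1..Suc n} = insert (Suc n) {1..n}"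
    by (rule atLeastAtMostSuc_conv) simp
  ultimately show ?case
    by (simp only: image_insert independent_insert inj_on_insert) simp
qed

lemma sum_indicator_mult_indicator:
  assumes "finite I"
  shows "(\<Sum>l\<in>I. indicator (S l) i * indicator (S l) j :: real)
    = real (card {l\<in>I. i \<in> S l \<and> j \<in> S l})"
proof -
  have "(\<Sum>l\<in>I. indicator (S l) i * indicator (S l) j :: real)
      = (\<Sum>l\<in>I. if i \<in> S l \<and> j \<in> S l then 1 else 0)"
    by (rule sum.cong) (auto simp: indicator_def)
  also have "\<dots> = real (card {l\<in>I. i \<in> S l \<and> j \<in> S l})"
    using assms by (simp add: sum.If_cases Int_def)
  finally show ?thesis .
qed

lemma in_cedges_iff: "i \<noteq> j \<Longrightarrow> {i, j} \<in> cedges V \<longleftrightarrow> i \<in> V \<and> j \<in> V"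
  unfolding cedges_def by (auto simp: doubleton_eq_iff)

lemma hop_matrix_nth:
  "hop_matrix L Vs t $ i $ j = t * (\<Sum>l\<in>{1..L}. indicator (Vs l) i * indicator (Vs l) j)"
proof -
  have "hop_matrix L Vs t $ i $ j = t * real (card {l\<in>{1..L}. i \<in> Vs l \<and> j \<in> Vs l})"
  proof (cases "i = j")
    case True
    then show ?thesis
      by (simp add: hop_matrix_def vweight_def)
  next
    case False
    then have "{l\<in>{1..L}. {i, j} \<in> cedges (Vs l)} = {l\<in>{1..L}. i \<in> Vs l \<and> j \<in> Vs l}"
      by (simp add: in_cedges_iff)
    moreover have "{i, j} \<notin> graph_edges L Vs \<Longrightarrow> {l\<in>{1..L}. i \<in> Vs l \<and> j \<in> Vs l} = {}"
      using False by (auto simp: graph_edges_def in_cedges_iff)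
    ultimately show ?thesis
      using False by (auto simp: hop_matrix_def eweight_def)
  qed
  then show ?thesis
    by (simp only: sum_indicator_mult_indicator[OF finite_atLeastAtMost])
qed

lemma transpose_hop_matrix: "transpose (hop_matrix L Vs t) = hop_matrix L Vs t"
  by (simp add: vec_eq_iff transpose_def hop_matrix_nth mult.commute)

lemma hop_matrix_mult_vec:
  "hop_matrix L Vs t *v x = t *\<^sub>R (\<Sum>l\<in>{1..L}. (indicator_vec (Vs l) \<bullet> x) *\<^sub>R indicator_vec (Vs l))"
proof -
  have "(hop_matrix L Vs t *v x) $ i
      = t * (\<Sum>l\<in>{1..L}. (\<Sum>j\<in>UNIV. indicator (Vs l) j * x $ j) * indicator (Vs l) i)" for i
    unfolding matrix_vector_mult_def vec_lambda_beta hop_matrix_nth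
    by (simp only: sum_distrib_left sum_distrib_right mult_ac) (rule sum.swap)
  then show ?thesis
    by (simp add: vec_eq_iff inner_vec_def sum_component)
qed

lemma inner_hop_matrix_mult_vec:
  "x \<bullet> (hop_matrix L Vs t *v x) = t * (\<Sum>l\<in>{1..L}. (indicator_vec (Vs l) \<bullet> x)\<^sup>2)"
  by (simp add: hop_matrix_mult_vec inner_sum_right power2_eq_square inner_commute)

lemma hop_matrix_null_space:
  assumes "t > 0"
  shows "{x. hop_matrix L Vs t *v x = 0} = {x. \<forall>u\<in>(\<lambda>l. indicator_vec (Vs l)) ` {1..L}. u \<bullet> x = 0}"
proof safe
  fix x l
  assume "hop_matrix L Vs t *v x = 0" and "l \<in> {1..L}"
  then have "(\<Sum>l\<in>{1..L}. (indicator_vec (Vs l) \<bullet> x)\<^sup>2) = 0"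
    using inner_hop_matrix_mult_vec[of x L Vs t] assms by simp
  with \<open>l \<in> {1..L}\<close> show "indicator_vec (Vs l) \<bullet> x = 0"
    by (simp add: sum_nonneg_eq_0_iff)
qed (simp add: hop_matrix_mult_vec)

lemma valid_construction_black_in:
  "valid_construction L Vs b \<Longrightarrow> 1 \<le> l \<Longrightarrow> l \<le> L \<Longrightarrow> b l \<in> Vs l"
  by (simp add: valid_construction_def)

lemma valid_construction_black_new:
  assumes "valid_construction L Vs b" and "1 \<le> k" "k < l" "l \<le> L"
  shows "b l \<notin> Vs k"
proof -
  have "l \<in> {2..L}" "k \<in> {1..<l}"
    using assms(2-4) by auto
  with assms(1) show ?thesis
    unfolding valid_construction_def by blast
qed

lemma valid_construction_card_less:
  fixes b :: "nat \<Rightarrow> 'n::finite"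
  assumes vc: "valid_construction L Vs b"
  shows "L < CARD('n)"
proof -
  have "inj_on b {1..L}"
  proof (rule linorder_inj_onI')
    fix k l
    assume "k \<in> {1..L}" "l \<in> {1..L}" "k < l"
    then show "b k \<noteq> b l"
      using valid_construction_black_in[OF vc, of k] valid_construction_black_new[OF vc, of k l]
      by auto
  qed
  then have "card (b ` {1..L}) = L"
    by (simp add: card_image)
  have "finite (Vs 1)" "card (Vs 1) \<ge> 2" "b 1 \<in> Vs 1"
    using vc by (auto simp: valid_construction_def)
  then have "card (Vs 1 - {b 1}) \<ge> 1"
    by (simp add: card_Diff_singleton)
  then obtain w where "w \<in> Vs 1" "w \<noteq> b 1"
    by (metis Diff_iff card.empty equals0I insertCI not_one_le_zero)
  then have "w \<notin> b ` {1..L}"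
    using valid_construction_black_new[OF vc, of 1] by (force simp: le_less)
  then have "b ` {1..L} \<subset> UNIV"
    by blast
  then show ?thesis
    using psubset_card_mono[of "UNIV :: 'n set" "b ` {1..L}"] \<open>card (b ` {1..L}) = L\<close> by simp
qed

theorem proposition1:
  fixes Vs :: "nat \<Rightarrow> 'n::finite set" and b :: "nat \<Rightarrow> 'n" and L :: nat and t :: real
  assumes "valid_construction L Vs b"
    and "(\<Union>l\<in>{1..L}. Vs l) = UNIV"
    and "t > 0"
  shows "(\<exists>x. x \<noteq> 0 \<and> hop_matrix L Vs t *v x = 0)
    \<and> (\<forall>(mu::complex) (x::complex^'n). x \<noteq> 0 \<and>
          (\<chi> i j. complex_of_real (hop_matrix L Vs t $ i $ j)) *v x = mu *s x
          \<longrightarrow> mu \<in> \<real> \<and> 0 \<le> Re mu)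
    \<and> dim {x. hop_matrix L Vs t *v x = 0} = CARD('n) - L"
proof -
  let ?a = "\<lambda>l. indicator_vec (Vs l)"
  have "independent (?a ` {1..L}) \<and> inj_on ?a {1..L}"
    using valid_construction_black_in[OF assms(1)] valid_construction_black_new[OF assms(1)]
    by (rule independent_indicator_vecs)
  then have "dim (?a ` {1..L}) = L"
    by (simp add: dim_eq_card_independent card_image)
  then have dim_null: "dim {x. hop_matrix L Vs t *v x = 0} = CARD('n) - L"
    unfolding hop_matrix_null_space[OF assms(3)] dim_orthogonal_complement by simp
  have zero_mode: "\<exists>x. x \<noteq> 0 \<and> hop_matrix L Vs t *v x = 0"
  proof (rule ccontr)
    assume "\<nexists>x. x \<noteq> 0 \<and> hop_matrix L Vs t *v x = 0"
    then have "dim {x. hop_matrix L Vs t *v x = 0} = 0"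
      by auto
    with dim_null valid_construction_card_less[OF assms(1)] show False
      by simp
  qed
  have psd: "0 \<le> x \<bullet> (hop_matrix L Vs t *v x)" for x
    using assms(3) by (simp add: inner_hop_matrix_mult_vec sum_nonneg)
  have eigenvalues: "\<forall>(mu::complex) (x::complex^'n). x \<noteq> 0 \<and>
          (\<chi> i j. complex_of_real (hop_matrix L Vs t $ i $ j)) *v x = mu *s x
          \<longrightarrow> mu \<in> \<real> \<and> 0 \<le> Re mu"
    using symmetric_psd_complex_eigenvalue[OF transpose_hop_matrix psd] by blast
  show ?thesis
    by (intro conjI zero_mode eigenvalues dim_null)
qed

end
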